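(* Let $\mathbb K$ be a field with $2\in\mathbb K^\times$, $A$ a unital commutative associative $\mathbb K$-algebra, $\mathfrak k$ a $\mathbb K$-Lie algebra and $\mathfrak g=A\otimes\mathfrak k$. Let $F:A\otimes\mathfrak k\otimes\mathfrak k\otimes\mathfrak k\to\Lambda^2(\mathfrak g)$ be the linear map with $F(a\otimes x\otimes y\otimes z)=(a\wedge\mathbf 1\otimes[x,y]\vee z)+a\otimes\partial_{\mathfrak k}(x\wedge y\wedge z)$. Then $$B_2(\mathfrak g)=\Lambda^2(A)\otimes\mathfrak k.S^2(\mathfrak k)+T_0(A)\otimes(\mathfrak k\vee\mathfrak k')+\mathrm{im}(F)+I_A\otimes(\mathfrak k\wedge\mathfrak k').$$
   Context: $\mathfrak g$ has bracket $[a\otimes x,a'\otimes x']=aa'\otimes[x,x']$, $ax=a\otimes x$, unit $\mathbf 1$, $\mathfrak k'=[\mathfrak k,\mathfrak k]$. $v\wedge w=\tfrac12(v\otimes w-w\otimes v)$, $v\vee w=\tfrac12(v\otimes w+w\otimes v)$. For a Lie algebra $\mathfrak h$, $\partial_{\mathfrak h}:\Lambda^3(\mathfrak h)\to\Lambda^2(\mathfrak h)$, $u\wedge v\wedge w\mapsto[u,v]\wedge w+[v,w]\wedge u+[w,u]\wedge v$, and $B_2(\mathfrak g)=\mathrm{im}\,\partial_{\mathfrak g}$. $I_A$ is the kernel of multiplication $S^2(A)\to A$. The spaces $\Lambda^2(A)\otimes S^2(\mathfrak k)$, $A\otimes\Lambda^2(\mathfrak k)$, $I_A\otimes\Lambda^2(\mathfrak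 k)$ are regarded as subspaces of $\Lambda^2(\mathfrak g)$ via $a\wedge b\otimes x\vee y\mapsto\tfrac12(ax\wedge by+ay\wedge bx)$, $a\otimes x\wedge y\mapsto\tfrac12(ax\wedge\mathbf 1y-ay\wedge\mathbf 1x)$, $a\vee b\otimes x\wedge y\mapsto\tfrac12(ax\wedge by-ay\wedge bx)$, and $\Lambda^2(\mathfrak g)$ is their direct sum. $\mathfrak k.S^2(\mathfrak k)$ is the span of $[z,x]\vee y+x\vee[z,y]$; $\mathfrak k\vee\mathfrak k'$ (resp. $\mathfrak k\wedge\mathfrak k'$) the span of $x\vee y$ (resp. $x\wedge y$) with $x\in\mathfrak k$, $y\in\mathfrak k'$. $T_0(A)$ is the span of $ab\wedge c+bc\wedge a+ca\wedge b-abc\wedge\mathbf 1$. *)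

theory Defs
  imports Complex_Main "HOL-Library.Function_Algebras"
begin

text \<open>
  For K-vector spaces V, W the canonical map
  V \<otimes> W \<rightarrow> (V* \<times> W* \<rightarrow> K), v \<otimes> w \<mapsto> (f,g) \<mapsto> f v * g w, is injective.
  We use the 4-fold version to model g \<otimes> g = (A \<otimes> k) \<otimes> (A \<otimes> k):
  the element (a\<otimes>x)\<otimes>(b\<otimes>y) is the function on quadruples of linear
  functionals (f,g,h,l) \<mapsto> f a * g x * h b * l y (and 0 on non-linear arguments).
  Lambda^2(g) is the subspace of antisymmetric tensors, u \<and> v = (u\<otimes>v - v\<otimes>u)/2.
\<close>

type_synonym ('k,'a,'l) ten4 = "('a \<Rightarrow> 'k) \<Rightarrow> ('l \<Rightarrow> 'k) \<Rightarrow> ('a \<Rightarrow> 'k) \<Rightarrow> ('l \<Rightarrow> 'k) \<Rightarrow> 'k"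

definition tscale :: "'k::field \<Rightarrow> ('k,'a,'l) ten4 \<Rightarrow> ('k,'a,'l) ten4" where
  "tscale c T = (\<lambda>f g h l. c * T f g h l)"

definition tspan :: "('k::field,'a,'l) ten4 set \<Rightarrow> ('k,'a,'l) ten4 set" where
  "tspan S = module.span tscale S"

text \<open>The unit of A is passed explicitly as a parameter u.\<close>

definition tp :: "('k::field \<Rightarrow> 'a::comm_ring \<Rightarrow> 'a) \<Rightarrow> ('k \<Rightarrow> 'l::ab_group_add \<Rightarrow> 'l)
    \<Rightarrow> 'a \<Rightarrow> 'l \<Rightarrow> 'a \<Rightarrow> 'l \<Rightarrow> ('k,'a,'l) ten4" where
  "tp sA sL a x b y = (\<lambda>f g h l.
     if Vector_Spaces.linear sA (*) f \<and> Vector_Spaces.linear sL (*) g \<and>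
        Vector_Spaces.linear sA (*) h \<and> Vector_Spaces.linear sL (*) l
     then f a * g x * h b * l y else 0)"

definition wd :: "('k::field \<Rightarrow> 'a::comm_ring \<Rightarrow> 'a) \<Rightarrow> ('k \<Rightarrow> 'l::ab_group_add \<Rightarrow> 'l)
    \<Rightarrow> 'a \<Rightarrow> 'l \<Rightarrow> 'a \<Rightarrow> 'l \<Rightarrow> ('k,'a,'l) ten4" where
  "wd sA sL a x b y = tscale (inverse 2) (tp sA sL a x b y - tp sA sL b y a x)"

text \<open>Elements of g = A \<otimes> k are represented by lists [(a_1,x_1),...,(a_n,x_n)]
  standing for sum a_i \<otimes> x_i.  Wedge of two elements of g (bilinear extension):\<close>
definition gwedge :: "('k::field \<Rightarrow> 'a::comm_ring \<Rightarrow> 'a) \<Rightarrow> ('k \<Rightarrow> 'l::ab_group_add \<Rightarrow> 'l)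
    \<Rightarrow> ('a \<times> 'l) list \<Rightarrow> ('a \<times> 'l) list \<Rightarrow> ('k,'a,'l) ten4" where
  "gwedge sA sL us vs = sum_list [wd sA sL a x b y. (a,x) \<leftarrow> us, (b,y) \<leftarrow> vs]"

definition gbr :: "('l \<Rightarrow> 'l \<Rightarrow> 'l) \<Rightarrow> ('a::comm_ring \<times> 'l) list \<Rightarrow> ('a \<times> 'l) list \<Rightarrow> ('a \<times> 'l) list" where
  "gbr br us vs = [(a * b, br x y). (a,x) \<leftarrow> us, (b,y) \<leftarrow> vs]"

definition bdry_g :: "('k::field \<Rightarrow> 'a::comm_ring \<Rightarrow> 'a) \<Rightarrow> ('k \<Rightarrow> 'l::ab_group_add \<Rightarrow> 'l)
    \<Rightarrow> ('l \<Rightarrow> 'l \<Rightarrow> 'l) \<Rightarrow> ('a \<times> 'l) list \<Rightarrow> ('a \<times> 'l) list \<Rightarrow> ('a \<times> 'l) list \<Rightarrow> ('k,'a,'l) ten4" where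
  "bdry_g sA sL br us vs ws =
     gwedge sA sL (gbr br us vs) ws + gwedge sA sL (gbr br vs ws) us + gwedge sA sL (gbr br ws us) vs"

text \<open>B_2(g) = im \<partial>_g; Lambda^3(g) is spanned by the u \<and> v \<and> w with u,v,w \<in> g.\<close>
definition B2 :: "('k::field \<Rightarrow> 'a::comm_ring \<Rightarrow> 'a) \<Rightarrow> ('k \<Rightarrow> 'l::ab_group_add \<Rightarrow> 'l)
    \<Rightarrow> ('l \<Rightarrow> 'l \<Rightarrow> 'l) \<Rightarrow> ('k,'a,'l) ten4 set" where
  "B2 sA sL br = tspan {bdry_g sA sL br us vs ws | us vs ws. True}"

(* a \<and> b \<otimes> x \<or> y  \<mapsto> (ax \<and> by + ay \<and> bx)/2 *)
definition embLS :: "('k::field \<Rightarrow> 'a::comm_ring \<Rightarrow> 'a) \<Rightarrow> ('k \<Rightarrow> 'l::ab_group_add \<Rightarrow> 'l)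
    \<Rightarrow> 'a \<Rightarrow> 'a \<Rightarrow> 'l \<Rightarrow> 'l \<Rightarrow> ('k,'a,'l) ten4" where
  "embLS sA sL a b x y = tscale (inverse 2) (wd sA sL a x b y + wd sA sL a y b x)"

(* a \<otimes> x \<and> y  \<mapsto> (ax \<and> 1y - ay \<and> 1x)/2 *)
definition embAL :: "('k::field \<Rightarrow> 'a::comm_ring \<Rightarrow> 'a) \<Rightarrow> ('k \<Rightarrow> 'l::ab_group_add \<Rightarrow> 'l)
    \<Rightarrow> 'a \<Rightarrow> 'a \<Rightarrow> 'l \<Rightarrow> 'l \<Rightarrow> ('k,'a,'l) ten4" where
  "embAL sA sL u a x y = tscale (inverse 2) (wd sA sL a x u y - wd sA sL a y u x)"

(* a \<or> b \<otimes> x \<and> y  \<mapsto> (ax \<and> by - ay \<and> bx)/2 *)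
definition embIL :: "('k::field \<Rightarrow> 'a::comm_ring \<Rightarrow> 'a) \<Rightarrow> ('k \<Rightarrow> 'l::ab_group_add \<Rightarrow> 'l)
    \<Rightarrow> 'a \<Rightarrow> 'a \<Rightarrow> 'l \<Rightarrow> 'l \<Rightarrow> ('k,'a,'l) ten4" where
  "embIL sA sL a b x y = tscale (inverse 2) (wd sA sL a x b y - wd sA sL a y b x)"

definition kder :: "('k::field \<Rightarrow> 'l::ab_group_add \<Rightarrow> 'l) \<Rightarrow> ('l \<Rightarrow> 'l \<Rightarrow> 'l) \<Rightarrow> 'l set" where
  "kder sL br = module.span sL {br u v | u v. True}"

text \<open>Lambda^2(A) \<otimes> k.S^2(k): spanned by (a \<and> b) \<otimes> ([z,x] \<or> y + x \<or> [z,y]).\<close>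
definition V1 :: "('k::field \<Rightarrow> 'a::comm_ring \<Rightarrow> 'a) \<Rightarrow> ('k \<Rightarrow> 'l::ab_group_add \<Rightarrow> 'l)
    \<Rightarrow> ('l \<Rightarrow> 'l \<Rightarrow> 'l) \<Rightarrow> ('k,'a,'l) ten4 set" where
  "V1 sA sL br = tspan {embLS sA sL a b (br z x) y + embLS sA sL a b x (br z y) | a b x y z. True}"

text \<open>T_0(A) \<otimes> (k \<or> k'): spanned by (ab \<and> c + bc \<and> a + ca \<and> b - abc \<and> 1) \<otimes> (x \<or> y), y \<in> k'.\<close>
definition V2 :: "('k::field \<Rightarrow> 'a::comm_ring \<Rightarrow> 'a) \<Rightarrow> ('k \<Rightarrow> 'l::ab_group_add \<Rightarrow> 'l)
    \<Rightarrow> 'a \<Rightarrow> ('l \<Rightarrow> 'l \<Rightarrow> 'l) \<Rightarrow> ('k,'a,'l) ten4 set" where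
  "V2 sA sL u br = tspan {embLS sA sL (a*b) c x y + embLS sA sL (b*c) a x y + embLS sA sL (c*a) b x y
                        - embLS sA sL (a*b*c) u x y | a b c x y. y \<in> kder sL br}"

text \<open>im(F), F(a\<otimes>x\<otimes>y\<otimes>z) = (a \<and> 1 \<otimes> [x,y] \<or> z) + a \<otimes> ([x,y] \<and> z + [y,z] \<and> x + [z,x] \<and> y).\<close>
definition Fmap :: "('k::field \<Rightarrow> 'a::comm_ring \<Rightarrow> 'a) \<Rightarrow> ('k \<Rightarrow> 'l::ab_group_add \<Rightarrow> 'l)
    \<Rightarrow> 'a \<Rightarrow> ('l \<Rightarrow> 'l \<Rightarrow> 'l) \<Rightarrow> 'a \<Rightarrow> 'l \<Rightarrow> 'l \<Rightarrow> 'l \<Rightarrow> ('k,'a,'l) ten4" where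
  "Fmap sA sL u br a x y z = embLS sA sL a u (br x y) z
      + (embAL sA sL u a (br x y) z + embAL sA sL u a (br y z) x + embAL sA sL u a (br z x) y)"

definition V3 :: "('k::field \<Rightarrow> 'a::comm_ring \<Rightarrow> 'a) \<Rightarrow> ('k \<Rightarrow> 'l::ab_group_add \<Rightarrow> 'l)
    \<Rightarrow> 'a \<Rightarrow> ('l \<Rightarrow> 'l \<Rightarrow> 'l) \<Rightarrow> ('k,'a,'l) ten4 set" where
  "V3 sA sL u br = tspan {Fmap sA sL u br a x y z | a x y z. True}"

text \<open>I_A \<otimes> (k \<and> k'): elements of S^2(A) are sums  sum a_i \<or> b_i  (lists of pairs);
  I_A consists of those with sum a_i b_i = 0.\<close>
definition V4 :: "('k::field \<Rightarrow> 'a::comm_ring \<Rightarrow> 'a) \<Rightarrow> ('k \<Rightarrow> 'l::ab_group_add \<Rightarrow> 'l)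
    \<Rightarrow> ('l \<Rightarrow> 'l \<Rightarrow> 'l) \<Rightarrow> ('k,'a,'l) ten4 set" where
  "V4 sA sL br = tspan {sum_list [embIL sA sL a b x y. (a,b) \<leftarrow> ps] | ps x y.
                        sum_list [a * b. (a,b) \<leftarrow> ps] = 0 \<and> y \<in> kder sL br}"

end

theory Submission
  imports Defs
begin

(* B\<^sub>2(\<gg>) is spanned by the boundaries \<partial>(ax \<and> by \<and> cz) of pure triples, since \<partial> is
   trilinear.  Each of them is an explicit sum of one element of im(F), one generator of
   T\<^sub>0(A) \<otimes> (\<kk> \<or> \<kk>'), two generators of \<Lambda>\<^sup>2(A) \<otimes> \<kk>.S\<^sup>2(\<kk>) and three generators
   (a \<or> b - ab \<or> 1) \<otimes> (x \<and> [y,z]) of I\<^sub>A \<otimes> (\<kk> \<and> \<kk>').  Conversely, the generators of im(F), of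
   \<Lambda>\<^sup>2(A) \<otimes> \<kk>.S\<^sup>2(\<kk>), and of I\<^sub>A \<otimes> (\<kk> \<and> \<kk>') with a bracket in the last factor are explicit
   combinations of boundaries of triples containing the unit 1; linearity extends the last ones
   to all of \<kk>'.  Solving the decomposition of \<partial>(ax \<and> by \<and> cz) for its T\<^sub>0 term then puts
   T\<^sub>0(A) \<otimes> (\<kk> \<or> \<kk>') inside B\<^sub>2(\<gg>) as well. *)

lemma tscale_vector_space: "vector_space (tscale :: 'k::field \<Rightarrow> ('k,'a,'l) ten4 \<Rightarrow> ('k,'a,'l) ten4)"
  by unfold_locales (auto simp: tscale_def fun_eq_iff algebra_simps)

global_interpretation ten4: vector_space "tscale :: 'k::field \<Rightarrow> ('k,'a,'l) ten4 \<Rightarrow> ('k,'a,'l) ten4"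
  by (fact tscale_vector_space)

lemma tspan_eq_span: "tspan = ten4.span"
  by (simp add: tspan_def fun_eq_iff)

lemma linear_image_span_mem:
  assumes "y \<in> module.span s1 S" "Vector_Spaces.linear s1 s2 G" "module.subspace s2 X"
    and "\<And>s. s \<in> S \<Longrightarrow> G s \<in> X"
  shows "G y \<in> X"
proof -
  interpret module_hom s1 s2 G
    using assms(2) by (simp add: linear_iff_module_hom)
  have "m2.span (G ` S) \<subseteq> X"
    using assms(3,4) by (intro m2.span_minimal) auto
  then show ?thesis
    using assms(1) by (auto simp: span_image)
qed

lemma bracket_skew:
  fixes br :: "'l::ab_group_add \<Rightarrow> 'l \<Rightarrow> 'l"
  assumes "\<And>x y z. br (x + y) z = br x z + br y z" "\<And>x y z. br x (y + z) = br x y + br x z"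
    and "\<And>x. br x x = 0"
  shows "br y x = - br x y"
proof -
  have "0 = br (x + y) (x + y)" by (simp add: assms(3))
  also have "\<dots> = br x x + br y x + (br x y + br y y)" by (simp only: assms(1,2))
  also have "\<dots> = br x y + br y x" by (simp add: assms(3))
  finally show ?thesis by (metis add_eq_0_iff)
qed

(* A tensor built from tp vanishes unless all four functionals are linear, and is a polynomial
   in their values otherwise; identities between tensors are proved pointwise on this basis. *)
definition lin_functionals ::
    "('k::field \<Rightarrow> 'a::comm_ring \<Rightarrow> 'a) \<Rightarrow> ('k \<Rightarrow> 'l::ab_group_add \<Rightarrow> 'l)
      \<Rightarrow> ('a \<Rightarrow> 'k) \<Rightarrow> ('l \<Rightarrow> 'k) \<Rightarrow> ('a \<Rightarrow> 'k) \<Rightarrow> ('l \<Rightarrow> 'k) \<Rightarrow> bool" where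
  "lin_functionals sA sL f g h l \<longleftrightarrow>
     Vector_Spaces.linear sA (*) f \<and> Vector_Spaces.linear sL (*) g \<and>
     Vector_Spaces.linear sA (*) h \<and> Vector_Spaces.linear sL (*) l"

lemma lin_functionals_hom:
  assumes "lin_functionals sA sL f g h l"
  shows "f (a + b) = f a + f b" "h (a + b) = h a + h b" "f (- a) = - f a" "h (- a) = - h a"
    "g (x + y) = g x + g y" "l (x + y) = l x + l y" "g (- x) = - g x" "l (- x) = - l x"
    "g (sL c x) = c * g x" "l (sL c x) = c * l x"
  using assms
  by (auto simp: lin_functionals_def linear_iff_module_hom module_hom.add module_hom.neg
      module_hom.scale)

(* An opaque 1/2, so that the pointwise identities are ring identities that algebra can check. *)
definition half :: "'k::field" where
  "half = inverse 2"

lemma tscale_apply: "tscale c T f g h l = c * T f g h l"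
  by (simp add: tscale_def)

lemma tp_apply:
  "tp sA sL a x b y f g h l =
     (if lin_functionals sA sL f g h l then f a * g x * h b * l y else 0)"
  by (simp add: tp_def lin_functionals_def)

lemma wd_apply:
  "wd sA sL a x b y f g h l =
     (if lin_functionals sA sL f g h l
      then half * (f a * g x * h b * l y - f b * g y * h a * l x) else 0)"
  by (simp add: wd_def tscale_apply tp_apply half_def)

lemma embLS_apply:
  "embLS sA sL a b x y f g h l = half * (wd sA sL a x b y f g h l + wd sA sL a y b x f g h l)"
  by (simp add: embLS_def tscale_apply half_def)

lemma embAL_apply:
  "embAL sA sL u a x y f g h l = half * (wd sA sL a x u y f g h l - wd sA sL a y u x f g h l)"
  by (simp add: embAL_def tscale_apply half_def)

lemma embIL_apply:
  "embIL sA sL a b x y f g h l = half * (wd sA sL a x b y f g h l - wd sA sL a y b x f g h l)"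
  by (simp add: embIL_def tscale_apply half_def)

lemma bdry_g_singletons:
  "bdry_g sA sL br [(a, x)] [(b, y)] [(c, z)] =
     wd sA sL (a * b) (br x y) c z + wd sA sL (b * c) (br y z) a x + wd sA sL (c * a) (br z x) b y"
  by (simp add: bdry_g_def gwedge_def gbr_def)

lemmas ten4_apply = tscale_apply wd_apply embLS_apply embIL_apply embAL_apply Fmap_def
  bdry_g_singletons

lemma gwedge_eq_sum:
  "gwedge sA sL us vs = (\<Sum>(a, x)\<leftarrow>us. \<Sum>(b, y)\<leftarrow>vs. wd sA sL a x b y)"
  by (induction us) (auto simp: gwedge_def)

lemma gbr_Cons: "gbr br ((a, x) # us) vs = map (\<lambda>(b, y). (a * b, br x y)) vs @ gbr br us vs"
  by (simp add: gbr_def)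

lemma gwedge_gbr_eq_sum:
  "gwedge sA sL (gbr br us vs) ws =
     (\<Sum>(a, x)\<leftarrow>us. \<Sum>(b, y)\<leftarrow>vs. \<Sum>(c, z)\<leftarrow>ws. wd sA sL (a * b) (br x y) c z)"
proof (induction us)
  case Nil
  show ?case by (simp add: gbr_def gwedge_def)
next
  case (Cons p us)
  then show ?case
    by (cases p) (simp add: gbr_Cons gwedge_eq_sum o_def split_def)
qed

lemma bdry_g_Nil: "bdry_g sA sL br [] vs ws = 0"
  unfolding bdry_g_def gwedge_gbr_eq_sum by (simp add: gwedge_eq_sum split_def)

lemma bdry_g_Cons:
  "bdry_g sA sL br (p # us) vs ws = bdry_g sA sL br [p] vs ws + bdry_g sA sL br us vs ws"
  unfolding bdry_g_def gwedge_gbr_eq_sum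
  by (simp add: gwedge_eq_sum sum_list_addf split_def ac_simps)

lemma bdry_g_rotate: "bdry_g sA sL br us vs ws = bdry_g sA sL br vs ws us"
  by (simp add: bdry_g_def ac_simps)

lemma bdry_g_mem_subspace:
  assumes X: "ten4.subspace X" and pure: "\<And>p q r. bdry_g sA sL br [p] [q] [r] \<in> X"
  shows "bdry_g sA sL br us vs ws \<in> X"
proof -
  have reduce_first: "bdry_g sA sL br us vs ws \<in> X" if "\<And>p. bdry_g sA sL br [p] vs ws \<in> X" for us vs ws
    using that
  proof (induction us)
    case Nil
    show ?case unfolding bdry_g_Nil by (rule ten4.subspace_0[OF X])
  next
    case (Cons p us)
    then have "bdry_g sA sL br [p] vs ws + bdry_g sA sL br us vs ws \<in> X"
      by (intro ten4.subspace_add[OF X]) auto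
    then show ?case by (subst bdry_g_Cons)
  qed
  show ?thesis
    by (rule reduce_first, subst bdry_g_rotate, rule reduce_first, subst bdry_g_rotate, rule reduce_first,
        subst bdry_g_rotate, rule pure)
qed

definition ad_tensor ::
    "('k::field \<Rightarrow> 'a::comm_ring \<Rightarrow> 'a) \<Rightarrow> ('k \<Rightarrow> 'l::ab_group_add \<Rightarrow> 'l) \<Rightarrow> ('l \<Rightarrow> 'l \<Rightarrow> 'l)
      \<Rightarrow> 'a \<Rightarrow> 'a \<Rightarrow> 'l \<Rightarrow> 'l \<Rightarrow> 'l \<Rightarrow> ('k,'a,'l) ten4" where
  "ad_tensor sA sL br a b z x y = embLS sA sL a b (br z x) y + embLS sA sL a b x (br z y)"

definition t0_tensor ::
    "('k::field \<Rightarrow> 'a::comm_ring \<Rightarrow> 'a) \<Rightarrow> ('k \<Rightarrow> 'l::ab_group_add \<Rightarrow> 'l)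
      \<Rightarrow> 'a \<Rightarrow> 'a \<Rightarrow> 'a \<Rightarrow> 'a \<Rightarrow> 'l \<Rightarrow> 'l \<Rightarrow> ('k,'a,'l) ten4" where
  "t0_tensor sA sL u a b c x y =
     embLS sA sL (a * b) c x y + embLS sA sL (b * c) a x y + embLS sA sL (c * a) b x y
     - embLS sA sL (a * b * c) u x y"

(* (a \<or> b - ab \<or> 1) \<otimes> (x \<and> y), generating I\<^sub>A \<otimes> (\<kk> \<and> \<kk>') *)
definition ia_tensor ::
    "('k::field \<Rightarrow> 'a::comm_ring \<Rightarrow> 'a) \<Rightarrow> ('k \<Rightarrow> 'l::ab_group_add \<Rightarrow> 'l)
      \<Rightarrow> 'a \<Rightarrow> 'a \<Rightarrow> 'a \<Rightarrow> 'l \<Rightarrow> 'l \<Rightarrow> ('k,'a,'l) ten4" where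
  "ia_tensor sA sL u a b x y = embIL sA sL a b x y - embIL sA sL (a * b) u x y"

lemma t0_tensor_linear:
  assumes "vector_space sL"
  shows "Vector_Spaces.linear sL tscale (t0_tensor sA sL u a b c x)"
  unfolding Vector_Spaces.linear_iff
proof (intro conjI allI assms tscale_vector_space ext)
  fix y y' s f g h l
  show "t0_tensor sA sL u a b c x (y + y') f g h l =
      (t0_tensor sA sL u a b c x y + t0_tensor sA sL u a b c x y') f g h l"
    and "t0_tensor sA sL u a b c x (sL s y) f g h l =
      tscale s (t0_tensor sA sL u a b c x y) f g h l"
    by (cases "lin_functionals sA sL f g h l";
        simp add: t0_tensor_def ten4_apply lin_functionals_hom; simp add: algebra_simps)+
qed

lemma ia_tensor_linear:
  assumes "vector_space sL"
  shows "Vector_Spaces.linear sL tscale (ia_tensor sA sL u a b x)"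
  unfolding Vector_Spaces.linear_iff
proof (intro conjI allI assms tscale_vector_space ext)
  fix y y' s f g h l
  show "ia_tensor sA sL u a b x (y + y') f g h l =
      (ia_tensor sA sL u a b x y + ia_tensor sA sL u a b x y') f g h l"
    and "ia_tensor sA sL u a b x (sL s y) f g h l =
      tscale s (ia_tensor sA sL u a b x y) f g h l"
    by (cases "lin_functionals sA sL f g h l";
        simp add: ia_tensor_def ten4_apply lin_functionals_hom; simp add: algebra_simps)+
qed

lemma embIL_additive_left: "additive (\<lambda>a. embIL sA sL a b x y)"
proof
  fix a a'
  show "embIL sA sL (a + a') b x y = embIL sA sL a b x y + embIL sA sL a' b x y"
  proof (intro ext)
    fix f g h l
    show "embIL sA sL (a + a') b x y f g h l = (embIL sA sL a b x y + embIL sA sL a' b x y) f g h l"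
      by (cases "lin_functionals sA sL f g h l"; simp add: ten4_apply lin_functionals_hom;
          simp add: algebra_simps)
  qed
qed

lemma B2_subspace: "ten4.subspace (B2 sA sL br)"
  unfolding B2_def tspan_eq_span by (rule ten4.subspace_span)

lemma bdry_g_mem_B2: "bdry_g sA sL br us vs ws \<in> B2 sA sL br"
  unfolding B2_def tspan_eq_span by (rule ten4.span_base) blast

lemmas B2_closed = ten4.subspace_add[OF B2_subspace] ten4.subspace_diff[OF B2_subspace]
  ten4.subspace_neg[OF B2_subspace] ten4.subspace_scale[OF B2_subspace] bdry_g_mem_B2

lemma ad_tensor_mem_V1: "ad_tensor sA sL br a b z x y \<in> V1 sA sL br"
  unfolding V1_def tspan_eq_span ad_tensor_def by (rule ten4.span_base) blast

lemma t0_tensor_mem_V2: "y \<in> kder sL br \<Longrightarrow> t0_tensor sA sL u a b c x y \<in> V2 sA sL u br"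
  unfolding V2_def tspan_eq_span t0_tensor_def by (rule ten4.span_base) blast

lemma Fmap_mem_V3: "Fmap sA sL u br a x y z \<in> V3 sA sL u br"
  unfolding V3_def tspan_eq_span by (rule ten4.span_base) blast

locale current_algebra =
  fixes sA :: "'k::field \<Rightarrow> 'a::comm_ring \<Rightarrow> 'a" and sL :: "'k \<Rightarrow> 'l::ab_group_add \<Rightarrow> 'l"
    and u :: 'a and br :: "'l \<Rightarrow> 'l \<Rightarrow> 'l"
  assumes unit: "u * a = a" and skew: "br y x = - br x y" and vsL: "vector_space sL"
begin

lemma unit_right: "a * u = a"
  using unit[of a] by (simp add: mult.commute)

lemma bracket_mem_kder: "br x y \<in> kder sL br"
proof -
  interpret vector_space sL by (fact vsL)
  show ?thesis unfolding kder_def by (rule span_base) auto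
qed

lemma ad_tensor_eq_bdry:
  "ad_tensor sA sL br a b z x y = tscale half (-
     (bdry_g sA sL br [(u, x)] [(a, y)] [(b, z)] + bdry_g sA sL br [(u, x)] [(a, z)] [(b, y)]
      + bdry_g sA sL br [(u, y)] [(a, x)] [(b, z)] + bdry_g sA sL br [(u, y)] [(a, z)] [(b, x)]))"
  (is "?L = ?R")
proof (intro ext)
  fix f g h l
  show "?L f g h l = ?R f g h l"
  proof (cases "lin_functionals sA sL f g h l")
    case True
    show ?thesis
      by (simp add: ten4_apply ad_tensor_def True unit unit_right
          lin_functionals_hom[OF True] skew[of x y] skew[of y z] skew[of x z]) algebra
  qed (simp add: ten4_apply ad_tensor_def)
qed

lemma Fmap_eq_bdry:
  "Fmap sA sL u br a x y z = tscale half
     (bdry_g sA sL br [(u, y)] [(u, z)] [(a, x)] - bdry_g sA sL br [(u, x)] [(u, z)] [(a, y)])"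
  (is "?L = ?R")
proof (intro ext)
  fix f g h l
  show "?L f g h l = ?R f g h l"
  proof (cases "lin_functionals sA sL f g h l")
    case True
    show ?thesis
      by (simp add: ten4_apply True unit unit_right
          lin_functionals_hom[OF True] skew[of x y] skew[of y z] skew[of x z]) algebra
  qed (simp add: ten4_apply)
qed

lemma ia_tensor_bracket_eq_bdry:
  "ia_tensor sA sL u a b x (br p q) = tscale half
     (bdry_g sA sL br [(u, p)] [(u, q)] [(a * b, x)] - bdry_g sA sL br [(u, x)] [(a, q)] [(b, p)]
      - bdry_g sA sL br [(u, p)] [(a, q)] [(b, x)] - bdry_g sA sL br [(u, q)] [(a, x)] [(b, p)])"
  (is "?L = ?R")
proof (intro ext)
  fix f g h l
  show "?L f g h l = ?R f g h l"
  proof (cases "lin_functionals sA sL f g h l")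
    case True
    show ?thesis
      by (simp add: ten4_apply ia_tensor_def True unit unit_right
          lin_functionals_hom[OF True] skew[of p q] skew[of q x] skew[of x p]) algebra
  qed (simp add: ten4_apply ia_tensor_def)
qed

lemma ad_tensor_mem_B2: "ad_tensor sA sL br a b z x y \<in> B2 sA sL br"
  unfolding ad_tensor_eq_bdry by (intro B2_closed)

lemma Fmap_mem_B2: "Fmap sA sL u br a x y z \<in> B2 sA sL br"
  unfolding Fmap_eq_bdry by (intro B2_closed)

lemma V1_subset_B2: "V1 sA sL br \<subseteq> B2 sA sL br"
  unfolding V1_def tspan_eq_span ad_tensor_def[symmetric]
  by (intro ten4.span_minimal B2_subspace) (auto intro: ad_tensor_mem_B2)

lemma V3_subset_B2: "V3 sA sL u br \<subseteq> B2 sA sL br"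
  unfolding V3_def tspan_eq_span
  by (intro ten4.span_minimal B2_subspace) (auto intro: Fmap_mem_B2)

lemma ia_tensor_mem_B2:
  assumes "y \<in> kder sL br"
  shows "ia_tensor sA sL u a b x y \<in> B2 sA sL br"
proof -
  have "ia_tensor sA sL u a b x (br p q) \<in> B2 sA sL br" for p q
    unfolding ia_tensor_bracket_eq_bdry by (intro B2_closed)
  then show ?thesis
    using assms unfolding kder_def
    by (auto intro: linear_image_span_mem[OF _ ia_tensor_linear[OF vsL] B2_subspace])
qed

lemma embIL_sum_minus_mem_B2:
  assumes y: "y \<in> kder sL br"
  shows "(\<Sum>(a, b)\<leftarrow>ps. embIL sA sL a b x y) - embIL sA sL (\<Sum>(a, b)\<leftarrow>ps. a * b) u x y
    \<in> B2 sA sL br"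
proof (induction ps)
  case Nil
  have "embIL sA sL 0 u x y = 0"
    by (rule additive.zero[OF embIL_additive_left])
  then show ?case
    using ten4.subspace_0[OF B2_subspace] by (simp only: list.map sum_list.Nil diff_zero)
next
  case (Cons p ps)
  obtain a b where p: "p = (a, b)" by (cases p)
  have "(\<Sum>(a, b)\<leftarrow>p # ps. embIL sA sL a b x y) - embIL sA sL (\<Sum>(a, b)\<leftarrow>p # ps. a * b) u x y =
    ia_tensor sA sL u a b x y
    + ((\<Sum>(a, b)\<leftarrow>ps. embIL sA sL a b x y) - embIL sA sL (\<Sum>(a, b)\<leftarrow>ps. a * b) u x y)"
    by (simp add: p ia_tensor_def additive.add[OF embIL_additive_left])
  then show ?case
    by (simp only:) (intro B2_closed ia_tensor_mem_B2 y Cons.IH)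
qed

lemma V4_subset_B2: "V4 sA sL br \<subseteq> B2 sA sL br"
  unfolding V4_def tspan_eq_span
proof (intro ten4.span_minimal B2_subspace, safe)
  fix ps :: "('a \<times> 'a) list" and x y
  assume "(\<Sum>(a, b)\<leftarrow>ps. a * b) = 0" and "y \<in> kder sL br"
  then show "(\<Sum>(a, b)\<leftarrow>ps. embIL sA sL a b x y) \<in> B2 sA sL br"
    using embIL_sum_minus_mem_B2[of y x ps] by (simp add: additive.zero[OF embIL_additive_left])
qed

lemma ia_tensor_mem_V4:
  assumes "y \<in> kder sL br"
  shows "ia_tensor sA sL u a b x y \<in> V4 sA sL br"
proof -
  let ?ps = "[(a, b), (- (a * b), u)]"
  have "ia_tensor sA sL u a b x y = (\<Sum>(p, q)\<leftarrow>?ps. embIL sA sL p q x y)"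
    by (simp add: ia_tensor_def additive.minus[OF embIL_additive_left])
  moreover have "(\<Sum>(p, q)\<leftarrow>?ps. p * q) = 0"
    by (simp add: unit_right)
  ultimately show ?thesis
    using assms unfolding V4_def tspan_eq_span by (intro ten4.span_base) blast
qed

end

locale current_algebra_inv2 = current_algebra sA sL u br
  for sA :: "'k::field \<Rightarrow> 'a::comm_ring \<Rightarrow> 'a" and sL u br +
  assumes two: "(2::'k) \<noteq> 0"
begin

lemma bdry_g_pure_decomposition:
  "bdry_g sA sL br [(a, x)] [(b, y)] [(c, z)] =
     Fmap sA sL u br (a * b * c) x y z + t0_tensor sA sL u a b c z (br x y)
     + ad_tensor sA sL br (b * c) a y z x - ad_tensor sA sL br (c * a) b x z y
     - ia_tensor sA sL u (a * b) c z (br x y) - ia_tensor sA sL u (b * c) a x (br y z)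
     - ia_tensor sA sL u (c * a) b y (br z x)"
  (is "?L = ?R")
proof (intro ext)
  fix f g h l
  show "?L f g h l = ?R f g h l"
  proof (cases "lin_functionals sA sL f g h l")
    case True
    have abc: "b * c * a = a * b * c" "c * a * b = a * b * c"
      by (simp_all add: mult_ac)
    have "2 * half = (1::'k)" using two by (simp add: half_def)
    then show ?thesis
      by (simp add: ten4_apply t0_tensor_def ad_tensor_def ia_tensor_def True unit abc
          lin_functionals_hom[OF True] skew[of x y] skew[of x z]) algebra
  qed (simp add: ten4_apply t0_tensor_def ad_tensor_def ia_tensor_def)
qed

lemma t0_tensor_mem_B2:
  assumes "y \<in> kder sL br"
  shows "t0_tensor sA sL u a b c x y \<in> B2 sA sL br"
proof -
  have "t0_tensor sA sL u a b c x (br p q) \<in> B2 sA sL br" for p q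
  proof -
    have "t0_tensor sA sL u a b c x (br p q) =
      bdry_g sA sL br [(a, p)] [(b, q)] [(c, x)] - Fmap sA sL u br (a * b * c) p q x
      - ad_tensor sA sL br (b * c) a q x p + ad_tensor sA sL br (c * a) b p x q
      + ia_tensor sA sL u (a * b) c x (br p q) + ia_tensor sA sL u (b * c) a p (br q x)
      + ia_tensor sA sL u (c * a) b q (br x p)"
      unfolding bdry_g_pure_decomposition by (simp add: algebra_simps)
    then show ?thesis
      by (simp only:) (intro B2_closed Fmap_mem_B2 ad_tensor_mem_B2 ia_tensor_mem_B2
          bracket_mem_kder)
  qed
  then show ?thesis
    using assms unfolding kder_def
    by (auto intro: linear_image_span_mem[OF _ t0_tensor_linear[OF vsL] B2_subspace])
qed

lemma V2_subset_B2: "V2 sA sL u br \<subseteq> B2 sA sL br"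
  unfolding V2_def tspan_eq_span t0_tensor_def[symmetric]
  by (intro ten4.span_minimal B2_subspace) (auto intro: t0_tensor_mem_B2)

lemma span_V_subset_B2:
  "tspan (V1 sA sL br \<union> V2 sA sL u br \<union> V3 sA sL u br \<union> V4 sA sL br) \<subseteq> B2 sA sL br"
  unfolding tspan_eq_span
  using V1_subset_B2 V2_subset_B2 V3_subset_B2 V4_subset_B2
  by (intro ten4.span_minimal B2_subspace) auto

lemma B2_subset_span_V:
  "B2 sA sL br \<subseteq> tspan (V1 sA sL br \<union> V2 sA sL u br \<union> V3 sA sL u br \<union> V4 sA sL br)"
proof -
  let ?V = "V1 sA sL br \<union> V2 sA sL u br \<union> V3 sA sL u br \<union> V4 sA sL br"
  have pure: "bdry_g sA sL br [(a, x)] [(b, y)] [(c, z)] \<in> ten4.span ?V" for a x b y c z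
    unfolding bdry_g_pure_decomposition
    by (intro ten4.span_add ten4.span_diff; rule ten4.span_base;
        simp add: Fmap_mem_V3 t0_tensor_mem_V2 ad_tensor_mem_V1 ia_tensor_mem_V4 bracket_mem_kder)
  have "bdry_g sA sL br us vs ws \<in> ten4.span ?V" for us vs ws
  proof (rule bdry_g_mem_subspace[OF ten4.subspace_span])
    show "bdry_g sA sL br [p] [q] [r] \<in> ten4.span ?V" for p q r
      using pure[of "fst p" "snd p" "fst q" "snd q" "fst r" "snd r"] by simp
  qed
  then show ?thesis
    unfolding B2_def tspan_eq_span by (intro ten4.span_minimal ten4.subspace_span) auto
qed

end

theorem theorem2p4:
  fixes sA :: "'k::field \<Rightarrow> 'a::comm_ring \<Rightarrow> 'a"
    and u :: 'a
    and sL :: "'k \<Rightarrow> 'l::ab_group_add \<Rightarrow> 'l"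
    and br :: "'l \<Rightarrow> 'l \<Rightarrow> 'l"
  assumes two: "(2::'k) \<noteq> 0"
    and vsA: "vector_space sA"
    and unitA: "\<And>a. u * a = a"
    and algA: "\<And>c a b. sA c (a * b) = sA c a * b"
    and vsL: "vector_space sL"
    and br_add_left: "\<And>x y z. br (x + y) z = br x z + br y z"
    and br_add_right: "\<And>x y z. br x (y + z) = br x y + br x z"
    and br_scale_left: "\<And>c x y. br (sL c x) y = sL c (br x y)"
    and br_scale_right: "\<And>c x y. br x (sL c y) = sL c (br x y)"
    and br_alt: "\<And>x. br x x = 0"
    and jacobi: "\<And>x y z. br x (br y z) + br y (br z x) + br z (br x y) = 0"
  shows "B2 sA sL br = tspan (V1 sA sL br \<union> V2 sA sL u br \<union> V3 sA sL u br \<union> V4 sA sL br)"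
proof -
  have skew: "br y x = - br x y" for x y
    by (rule bracket_skew[of br, OF br_add_left br_add_right br_alt])
  interpret current_algebra_inv2 sA sL u br
    by (intro current_algebra_inv2.intro current_algebra.intro current_algebra_inv2_axioms.intro
        unitA skew vsL two)
  show ?thesis
    using B2_subset_span_V span_V_subset_B2 by (rule equalityI)
qed

end
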